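(* Let $\mathbf{n}=(n_1,\dots,n_m)$ be integers with $n_1\ge n_2\ge\cdots\ge n_m\ge2$, and let $\mathbb{L}/\mathbb{K}$ be a Galois extension whose Galois group $G$ is generated by commuting $\theta_1,\dots,\theta_m$ such that $\mathbf{i}\mapsto\boldsymbol\theta^{\mathbf{i}}$ is a bijection $\Delta(\mathbf{n})\to G$ (so $G\cong\mathbb{Z}/n_1\mathbb{Z}\times\cdots\times\mathbb{Z}/n_m\mathbb{Z}$). Let $P\in\mathbb{L}[G]$ be nonzero. Then \[\mathrm{rk}_\mathbb{K}(P)\ \ge\ \min\Big\{\prod_{i=1}^m(n_i-u_i)\ :\ \mathbf{u}\in\Delta(\mathbf{n}),\ |\mathbf{u}|=\deg_{\boldsymbol\theta}(P)\Big\}=(n_s-\ell)\prod_{i=1}^{s-1}n_i,\] where $s\in\{1,\dots,m\}$ and $0\le\ell<n_s$ are integers with $\deg_{\boldsymbol\theta}(P)=\sum_{i=s+1}^m(n_i-1)+\ell$ (the value $(n_s-\ell)\prod_{i<s}n_i$ does not depend on the choice of such $(s,\ell)$).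
   Context: $\Delta(t)=\{0,1,\dots,t-1\}$, $\Delta(\mathbf{n})=\Delta(n_1)\times\cdots\times\Delta(n_m)$, $\boldsymbol\theta^{\mathbf{i}}=\theta_1^{i_1}\circ\cdots\circ\theta_m^{i_m}$, $|\mathbf{i}|=i_1+\cdots+i_m$. Every $P\in\mathbb{L}[G]$ is uniquely $P=\sum_{\mathbf{i}\in\Delta(\mathbf{n})}b_\mathbf{i}\boldsymbol\theta^\mathbf{i}$ with $b_\mathbf{i}\in\mathbb{L}$, and for $P\ne0$, $\deg_{\boldsymbol\theta}(P)=\max\{|\mathbf{i}|:b_\mathbf{i}\neq0\}$. $P$ acts on $\mathbb{L}$ as the $\mathbb{K}$-linear map $x\mapsto\sum b_\mathbf{i}\boldsymbol\theta^\mathbf{i}(x)$, and $\mathrm{rk}_\mathbb{K}(P)$ is its rank. *)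

theory Defs
  imports Main
begin

text \<open>The field L is the whole type 'a; K is a subset of it.
  Field automorphisms of L.\<close>
definition field_aut :: "('a::field \<Rightarrow> 'a) \<Rightarrow> bool" where
  "field_aut \<sigma> \<longleftrightarrow> bij \<sigma> \<and> (\<forall>x y. \<sigma> (x + y) = \<sigma> x + \<sigma> y)
     \<and> (\<forall>x y. \<sigma> (x * y) = \<sigma> x * \<sigma> y) \<and> \<sigma> 1 = 1"

definition is_subfield :: "'a::field set \<Rightarrow> bool" where
  "is_subfield K \<longleftrightarrow> 0 \<in> K \<and> 1 \<in> K \<and> (\<forall>x\<in>K. \<forall>y\<in>K. x + y \<in> K \<and> x * y \<in> K \<and> - x \<in> K)
     \<and> (\<forall>x\<in>K. x \<noteq> 0 \<longrightarrow> inverse x \<in> K)"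

definition galois_group :: "'a::field set \<Rightarrow> ('a \<Rightarrow> 'a) set" where
  "galois_group K = {\<sigma>. field_aut \<sigma> \<and> (\<forall>x\<in>K. \<sigma> x = x)}"

definition fixed_field :: "('a::field \<Rightarrow> 'a) set \<Rightarrow> 'a set" where
  "fixed_field G = {x. \<forall>\<sigma>\<in>G. \<sigma> x = x}"

definition galois_ext_with_group :: "'a::field set \<Rightarrow> ('a \<Rightarrow> 'a) set \<Rightarrow> bool" where
  "galois_ext_with_group K G \<longleftrightarrow> is_subfield K \<and> finite G \<and> galois_group K = G
     \<and> fixed_field (galois_group K) = K"

text \<open>Delta(n) for n = (n 0, ..., n (m-1)); multi-indices are functions nat => nat,
  zero outside {0..<m}.\<close>
definition Delta :: "nat \<Rightarrow> (nat \<Rightarrow> nat) \<Rightarrow> (nat \<Rightarrow> nat) set" where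
  "Delta m n = {i. (\<forall>j<m. i j < n j) \<and> (\<forall>j\<ge>m. i j = 0)}"

definition absidx :: "nat \<Rightarrow> (nat \<Rightarrow> nat) \<Rightarrow> nat" where
  "absidx m i = (\<Sum>j<m. i j)"

fun theta_pow :: "(nat \<Rightarrow> 'a \<Rightarrow> 'a) \<Rightarrow> nat \<Rightarrow> (nat \<Rightarrow> nat) \<Rightarrow> 'a \<Rightarrow> 'a" where
  "theta_pow \<theta> 0 i = id"
| "theta_pow \<theta> (Suc k) i = theta_pow \<theta> k i \<circ> (\<theta> k ^^ i k)"

definition op_action :: "(nat \<Rightarrow> 'a \<Rightarrow> 'a) \<Rightarrow> nat \<Rightarrow> (nat \<Rightarrow> nat) \<Rightarrow> ((nat \<Rightarrow> nat) \<Rightarrow> 'a::field) \<Rightarrow> 'a \<Rightarrow> 'a" where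
  "op_action \<theta> m n b x = (\<Sum>i\<in>Delta m n. b i * theta_pow \<theta> m i x)"

definition theta_deg :: "nat \<Rightarrow> (nat \<Rightarrow> nat) \<Rightarrow> ((nat \<Rightarrow> nat) \<Rightarrow> 'a::zero) \<Rightarrow> nat" where
  "theta_deg m n b = Max {absidx m i | i. i \<in> Delta m n \<and> b i \<noteq> 0}"

definition lin_indep_over :: "'a::field set \<Rightarrow> 'a set \<Rightarrow> bool" where
  "lin_indep_over K S \<longleftrightarrow> finite S \<and>
     (\<forall>c. (\<forall>s\<in>S. c s \<in> K) \<and> (\<Sum>s\<in>S. c s * s) = 0 \<longrightarrow> (\<forall>s\<in>S. c s = 0))"

text \<open>rank over K of a K-linear map f : L -> L = K-dimension of its image,
  i.e. the maximal size of a K-linearly independent subset of the image.\<close>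
definition rank_over :: "'a::field set \<Rightarrow> ('a \<Rightarrow> 'a) \<Rightarrow> nat" where
  "rank_over K f = Max (card ` {S. S \<subseteq> range f \<and> lin_indep_over K S})"

end

theory Submission
  imports Defs "HOL-Library.FuncSet" "HOL-Library.List_Lexorder"
begin

text \<open>Let \<open>u\<close> be the graded-lexicographically largest exponent of \<open>P = \<Sum> b\<^sub>i \<theta>\<^sup>i\<close>, and let
  \<open>J\<close> be the set of the \<open>\<Prod>(n\<^sub>i - u\<^sub>i)\<close> exponents \<open>j\<close> with \<open>j + u \<in> \<Delta>(n)\<close>. If the rank of \<open>P\<close>
  were smaller than \<open>|J|\<close>, a nontrivial \<open>(c\<^sub>j)\<^sub>j\<^sub>\<in>\<^sub>J\<close> would kill a \<open>K\<close>-basis of \<open>P(L)\<close> under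
  \<open>\<Sum> c\<^sub>j \<theta>\<^sup>j\<close>, so that \<open>(\<Sum> c\<^sub>j \<theta>\<^sup>j) \<circ> P = 0\<close> as a map. But the coefficient of the leading
  monomial \<open>\<theta>\<^sup>j\<^sup>'\<^sup>+\<^sup>u\<close> of this product (\<open>j'\<close> largest with \<open>c\<^sub>j\<^sub>' \<noteq> 0\<close>) is \<open>c\<^sub>j\<^sub>' \<theta>\<^sup>j\<^sup>'(b\<^sub>u) \<noteq> 0\<close>,
  contradicting Dedekind's independence of characters. The minimum of \<open>\<Prod>(n\<^sub>i - u\<^sub>i)\<close> over
  \<open>|u| = deg P\<close> is attained by the exponent filling the last coordinates first; this follows by
  induction on \<open>m\<close>, since of two factorisations with equal sum of factors the more unbalanced one
  has the smaller product.\<close>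

section \<open>Field automorphisms and Dedekind's lemma\<close>

lemma field_aut_add: "field_aut \<sigma> \<Longrightarrow> \<sigma> (x + y) = \<sigma> x + \<sigma> y"
  by (simp add: field_aut_def)

lemma field_aut_mult: "field_aut \<sigma> \<Longrightarrow> \<sigma> (x * y) = \<sigma> x * \<sigma> y"
  by (simp add: field_aut_def)

lemma field_aut_one: "field_aut \<sigma> \<Longrightarrow> \<sigma> 1 = 1"
  by (simp add: field_aut_def)

lemma field_aut_zero: "field_aut \<sigma> \<Longrightarrow> \<sigma> 0 = 0"
  using field_aut_add[of \<sigma> 0 0] by (metis add.right_neutral add_left_cancel)

lemma field_aut_sum: "field_aut \<sigma> \<Longrightarrow> \<sigma> (\<Sum>a\<in>A. f a) = (\<Sum>a\<in>A. \<sigma> (f a))"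
  by (induction A rule: infinite_finite_induct) (simp_all add: field_aut_zero field_aut_add)

lemma field_aut_eq_0_iff: "field_aut \<sigma> \<Longrightarrow> \<sigma> x = 0 \<longleftrightarrow> x = 0"
  by (metis bij_is_inj field_aut_def field_aut_zero injD)

lemma id_in_galois_group: "id \<in> galois_group K"
  by (simp add: galois_group_def field_aut_def)

lemma galois_group_comp:
  "\<sigma> \<in> galois_group K \<Longrightarrow> \<tau> \<in> galois_group K \<Longrightarrow> \<sigma> \<circ> \<tau> \<in> galois_group K"
  by (auto simp: galois_group_def field_aut_def bij_comp)

lemma galois_group_inv:
  assumes "\<sigma> \<in> galois_group K"
  shows "inv \<sigma> \<in> galois_group K"
proof -
  have fa: "field_aut \<sigma>" and fix_K: "\<forall>x\<in>K. \<sigma> x = x"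
    using assms by (auto simp: galois_group_def)
  then have "bij \<sigma>" by (simp add: field_aut_def)
  then have inv_right: "\<sigma> (inv \<sigma> x) = x" and inv_left: "inv \<sigma> (\<sigma> x) = x" for x
    by (simp_all add: bij_is_surj surj_f_inv_f bij_is_inj inv_f_f)
  have "inv \<sigma> (x + y) = inv \<sigma> x + inv \<sigma> y" for x y
    by (metis field_aut_add[OF fa] inv_right inv_left)
  moreover have "inv \<sigma> (x * y) = inv \<sigma> x * inv \<sigma> y" for x y
    by (metis field_aut_mult[OF fa] inv_right inv_left)
  ultimately show ?thesis using \<open>bij \<sigma>\<close> fa fix_K
    by (simp add: galois_group_def field_aut_def bij_imp_bij_inv) (metis inv_left)
qed

lemma dedekind_independence:
  fixes F :: "('a::field \<Rightarrow> 'a) set"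
  assumes "finite F" "\<forall>\<sigma>\<in>F. field_aut \<sigma>" "\<forall>x. (\<Sum>\<sigma>\<in>F. a \<sigma> * \<sigma> x) = 0"
  shows "\<forall>\<sigma>\<in>F. a \<sigma> = 0"
  using assms
proof (induction F arbitrary: a rule: finite_induct)
  case (insert h F)
  have fa_h: "field_aut h" using insert.prems by simp
  have rel: "(\<Sum>\<sigma>\<in>F. a \<sigma> * \<sigma> x) = - (a h * h x)" for x
    using insert by (simp add: eq_neg_iff_add_eq_0 add.commute)
  have "a \<sigma> = 0" if \<sigma>: "\<sigma> \<in> F" for \<sigma>
  proof -
    have "\<sigma> \<noteq> h" using \<sigma> insert.hyps(2) by blast
    then obtain y where y: "\<sigma> y \<noteq> h y" by (meson ext)
    \<comment> \<open>Comparing the relation at \<open>y * x\<close> with \<open>h y\<close> times the relation at \<open>x\<close>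
      eliminates \<open>h\<close>.\<close>
    have "(\<Sum>\<tau>\<in>F. a \<tau> * (\<tau> y - h y) * \<tau> x) = 0" for x
    proof -
      have "(\<Sum>\<tau>\<in>F. a \<tau> * \<tau> (y * x)) = (\<Sum>\<tau>\<in>F. a \<tau> * \<tau> y * \<tau> x)"
        using insert.prems by (intro sum.cong) (auto simp: field_aut_mult)
      then have "(\<Sum>\<tau>\<in>F. a \<tau> * (\<tau> y - h y) * \<tau> x)
          = (\<Sum>\<tau>\<in>F. a \<tau> * \<tau> (y * x)) - h y * (\<Sum>\<tau>\<in>F. a \<tau> * \<tau> x)"
        by (simp add: algebra_simps sum_subtractf sum_distrib_left)
      also have "\<dots> = 0"
        unfolding rel field_aut_mult[OF fa_h] by (simp add: algebra_simps)
      finally show ?thesis .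
    qed
    then have "a \<sigma> * (\<sigma> y - h y) = 0"
      using insert.IH[of "\<lambda>\<tau>. a \<tau> * (\<tau> y - h y)"] insert.prems \<sigma> by simp
    with y show ?thesis by simp
  qed
  moreover have "a h = 0"
    using rel[of 1] calculation insert.prems by (simp add: field_aut_one)
  ultimately show ?case by simp
qed simp

lemma dedekind_independence_fibre:
  fixes \<phi> :: "'x \<Rightarrow> 'a::field \<Rightarrow> 'a"
  assumes "finite X" "\<forall>\<xi>\<in>X. field_aut (\<phi> \<xi>)" "\<forall>x. (\<Sum>\<xi>\<in>X. a \<xi> * \<phi> \<xi> x) = 0" "\<xi>\<^sub>0 \<in> X"
  shows "(\<Sum>\<xi>\<in>{\<xi>\<in>X. \<phi> \<xi> = \<phi> \<xi>\<^sub>0}. a \<xi>) = 0"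
proof -
  define A where "A \<sigma> = (\<Sum>\<xi>\<in>{\<xi>\<in>X. \<phi> \<xi> = \<sigma>}. a \<xi>)" for \<sigma>
  have "(\<Sum>\<sigma>\<in>\<phi> ` X. A \<sigma> * \<sigma> x) = (\<Sum>\<xi>\<in>X. a \<xi> * \<phi> \<xi> x)" for x
  proof -
    have "(\<Sum>\<sigma>\<in>\<phi> ` X. A \<sigma> * \<sigma> x) = (\<Sum>\<sigma>\<in>\<phi> ` X. \<Sum>\<xi>\<in>{\<xi>\<in>X. \<phi> \<xi> = \<sigma>}. a \<xi> * \<phi> \<xi> x)"
      unfolding A_def sum_distrib_right by (intro sum.cong refl) auto
    also have "\<dots> = (\<Sum>\<xi>\<in>X. a \<xi> * \<phi> \<xi> x)"
      by (rule sum.image_gen[OF assms(1), symmetric])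
    finally show ?thesis .
  qed
  then have "\<forall>\<sigma>\<in>\<phi> ` X. A \<sigma> = 0"
    using dedekind_independence[of "\<phi> ` X" A] assms(1-3) by auto
  with assms(4) show ?thesis by (simp add: A_def)
qed

section \<open>Linear algebra over the fixed field\<close>

lemma homogeneous_system_nontrivial_solution:
  fixes A :: "'e \<Rightarrow> 'u \<Rightarrow> 'a::field"
  assumes "finite E" "finite U" "card E < card U"
  shows "\<exists>c. (\<exists>u\<in>U. c u \<noteq> 0) \<and> (\<forall>e\<in>E. (\<Sum>u\<in>U. A e u * c u) = 0)"
  using assms
proof (induction E arbitrary: U A rule: finite_induct)
  case empty
  then show ?case by (intro exI[of _ "\<lambda>_. 1"]) (auto simp: card_gt_0_iff)
next
  case (insert e\<^sub>0 E)
  show ?case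
  proof (cases "\<forall>u\<in>U. A e\<^sub>0 u = 0")
    case True
    then show ?thesis using insert.IH[of U A] insert.prems insert.hyps by auto
  next
    case False
    then obtain u\<^sub>0 where u\<^sub>0: "u\<^sub>0 \<in> U" "A e\<^sub>0 u\<^sub>0 \<noteq> 0" by auto
    define U' where "U' = U - {u\<^sub>0}"
    \<comment> \<open>Gaussian elimination of the unknown \<open>u\<^sub>0\<close> using the equation \<open>e\<^sub>0\<close>.\<close>
    define A' where "A' e u = A e u - A e u\<^sub>0 * A e\<^sub>0 u / A e\<^sub>0 u\<^sub>0" for e u
    have "finite U'" "card E < card U'"
      using insert u\<^sub>0 by (simp_all add: U'_def)
    then obtain c' where c': "\<exists>u\<in>U'. c' u \<noteq> 0" "\<forall>e\<in>E. (\<Sum>u\<in>U'. A' e u * c' u) = 0"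
      using insert.IH[of U' A'] by blast
    define S where "S = (\<Sum>u\<in>U'. A e\<^sub>0 u * c' u)"
    define c where "c = c'(u\<^sub>0 := - S / A e\<^sub>0 u\<^sub>0)"
    have split: "(\<Sum>u\<in>U. A e u * c u) = A e u\<^sub>0 * c u\<^sub>0 + (\<Sum>u\<in>U'. A e u * c' u)" for e
    proof -
      have "U = insert u\<^sub>0 U'" "u\<^sub>0 \<notin> U'" using u\<^sub>0 by (auto simp: U'_def)
      with \<open>finite U'\<close> have "(\<Sum>u\<in>U. A e u * c u) = A e u\<^sub>0 * c u\<^sub>0 + (\<Sum>u\<in>U'. A e u * c u)"
        by simp
      moreover have "(\<Sum>u\<in>U'. A e u * c u) = (\<Sum>u\<in>U'. A e u * c' u)"
        by (intro sum.cong) (auto simp: U'_def c_def)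
      ultimately show ?thesis by simp
    qed
    have "(\<Sum>u\<in>U. A e u * c u) = 0" if "e \<in> E" for e
    proof -
      have "0 = (\<Sum>u\<in>U'. A e u * c' u) - A e u\<^sub>0 / A e\<^sub>0 u\<^sub>0 * S"
        using c'(2) that
        by (simp add: A'_def S_def algebra_simps sum_subtractf sum_distrib_left sum_divide_distrib)
      then show ?thesis using split[of e] by (simp add: c_def)
    qed
    moreover have "(\<Sum>u\<in>U. A e\<^sub>0 u * c u) = 0"
      using split[of e\<^sub>0] u\<^sub>0(2) by (simp add: c_def S_def)
    moreover have "\<exists>u\<in>U. c u \<noteq> 0" using c'(1) by (auto simp: U'_def c_def)
    ultimately show ?thesis by auto
  qed
qed

lemma galois_group_solution_conj:
  assumes \<tau>: "\<tau> \<in> galois_group K"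
    and sol: "\<forall>\<sigma>\<in>galois_group K. (\<Sum>s\<in>S. \<sigma> s * c s) = 0"
  shows "\<forall>\<sigma>\<in>galois_group K. (\<Sum>s\<in>S. \<sigma> s * \<tau> (c s)) = 0"
proof
  fix \<sigma> assume \<sigma>: "\<sigma> \<in> galois_group K"
  have fa: "field_aut \<tau>" using \<tau> by (simp add: galois_group_def)
  have inv_right: "\<tau> (inv \<tau> x) = x" for x
    using fa by (simp add: field_aut_def bij_is_surj surj_f_inv_f)
  have "inv \<tau> \<circ> \<sigma> \<in> galois_group K"
    using \<sigma> \<tau> by (simp add: galois_group_comp galois_group_inv)
  then have "(\<Sum>s\<in>S. (inv \<tau> \<circ> \<sigma>) s * c s) = 0"
    using sol by blast
  then have "\<tau> (\<Sum>s\<in>S. (inv \<tau> \<circ> \<sigma>) s * c s) = 0"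
    by (simp add: field_aut_zero[OF fa])
  then show "(\<Sum>s\<in>S. \<sigma> s * \<tau> (c s)) = 0"
    by (simp add: field_aut_sum[OF fa] field_aut_mult[OF fa] inv_right)
qed

text \<open>If \<open>c\<close> were moved by \<open>\<tau>\<close>, then \<open>c - \<tau> \<circ> c\<close> would be a nonzero solution vanishing at
  \<open>s\<^sub>0\<close>, hence with smaller support.\<close>
lemma min_support_solution_galois_fixed:
  fixes c :: "'a::field \<Rightarrow> 'a"
  assumes sol: "\<forall>\<sigma>\<in>galois_group K. (\<Sum>s\<in>S. \<sigma> s * c s) = 0"
    and min: "\<And>d. \<forall>\<sigma>\<in>galois_group K. (\<Sum>s\<in>S. \<sigma> s * d s) = 0 \<Longrightarrow> {s\<in>S. d s \<noteq> 0} \<noteq> {} \<Longrightarrow>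
      card {s\<in>S. c s \<noteq> 0} \<le> card {s\<in>S. d s \<noteq> 0}"
    and S: "finite S" "s\<^sub>0 \<in> S" "c s\<^sub>0 = 1" and \<tau>: "\<tau> \<in> galois_group K" and "s \<in> S"
  shows "\<tau> (c s) = c s"
proof (rule ccontr)
  assume "\<tau> (c s) \<noteq> c s"
  define d where "d s = c s - \<tau> (c s)" for s
  have fa: "field_aut \<tau>" using \<tau> by (simp add: galois_group_def)
  have d_sol: "\<forall>\<sigma>\<in>galois_group K. (\<Sum>s\<in>S. \<sigma> s * d s) = 0"
    using sol galois_group_solution_conj[OF \<tau> sol] by (simp add: d_def right_diff_distrib sum_subtractf)
  have "s \<in> {s\<in>S. d s \<noteq> 0}" using \<open>s \<in> S\<close> \<open>\<tau> (c s) \<noteq> c s\<close> by (simp add: d_def)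
  then have "card {s\<in>S. c s \<noteq> 0} \<le> card {s\<in>S. d s \<noteq> 0}" using min[OF d_sol] by blast
  also have "\<dots> \<le> card ({s\<in>S. c s \<noteq> 0} - {s\<^sub>0})"
    using S(1,3) field_aut_one[OF fa] field_aut_zero[OF fa] by (intro card_mono) (auto simp: d_def)
  also have "\<dots> < card {s\<in>S. c s \<noteq> 0}"
    using S by (intro card_Diff1_less) auto
  finally show False by simp
qed

text \<open>A nontrivial solution \<open>c\<close> of the system
  \<open>\<Sum>\<^sub>s \<sigma> s * c s = 0\<close> (\<open>\<sigma> \<in> Gal(L/K)\<close>) with minimal support, normalised to \<open>c s\<^sub>0 = 1\<close>,
  is fixed by \<open>Gal(L/K)\<close>; so it takes values in \<open>K\<close>, and the equation for \<open>\<sigma> = id\<close> is a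
  \<open>K\<close>-linear dependence.\<close>
lemma card_lin_indep_le_card_galois_group:
  fixes S :: "'a::field set"
  assumes fin: "finite (galois_group K)" and fixed: "fixed_field (galois_group K) = K"
    and indep: "lin_indep_over K S"
  shows "card S \<le> card (galois_group K)"
proof (rule ccontr)
  define supp where "supp c = {s\<in>S. c s \<noteq> 0}" for c :: "'a \<Rightarrow> 'a"
  define Sol where "Sol = {c. supp c \<noteq> {} \<and> (\<forall>\<sigma>\<in>galois_group K. (\<Sum>s\<in>S. \<sigma> s * c s) = 0)}"
  have fin_S: "finite S" using indep by (simp add: lin_indep_over_def)
  assume "\<not> ?thesis"
  then obtain c\<^sub>0 where "c\<^sub>0 \<in> Sol"
    using homogeneous_system_nontrivial_solution[of "galois_group K" S "\<lambda>\<sigma> s. \<sigma> s"] fin fin_S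
    by (auto simp: Sol_def supp_def)
  then obtain c where c: "c \<in> Sol" and c_min: "\<And>d. d \<in> Sol \<Longrightarrow> card (supp c) \<le> card (supp d)"
    using ex_has_least_nat[of "\<lambda>c. c \<in> Sol" c\<^sub>0 "\<lambda>c. card (supp c)"] by blast
  obtain s\<^sub>0 where s\<^sub>0: "s\<^sub>0 \<in> S" "c s\<^sub>0 \<noteq> 0" using c by (auto simp: Sol_def supp_def)
  define c' where "c' s = c s / c s\<^sub>0" for s
  have c'_sol: "\<forall>\<sigma>\<in>galois_group K. (\<Sum>s\<in>S. \<sigma> s * c' s) = 0"
    using c by (auto simp: Sol_def c'_def simp flip: sum_divide_distrib)
  have "supp c' = supp c" using s\<^sub>0 by (auto simp: c'_def supp_def)
  then have c'_min: "card {s\<in>S. c' s \<noteq> 0} \<le> card {s\<in>S. d s \<noteq> 0}"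
    if "\<forall>\<sigma>\<in>galois_group K. (\<Sum>s\<in>S. \<sigma> s * d s) = 0" "{s\<in>S. d s \<noteq> 0} \<noteq> {}" for d
    using c_min[of d] that by (simp add: Sol_def supp_def)
  have "c' s\<^sub>0 = 1" using s\<^sub>0 by (simp add: c'_def)
  have c'_fixed: "\<tau> (c' s) = c' s" if "\<tau> \<in> galois_group K" "s \<in> S" for \<tau> s
    using min_support_solution_galois_fixed[OF c'_sol c'_min fin_S s\<^sub>0(1) \<open>c' s\<^sub>0 = 1\<close> that] .
  have "(\<Sum>s\<in>S. id s * c' s) = 0"
    using c'_sol id_in_galois_group[of K] by blast
  then have "(\<Sum>s\<in>S. c' s * s) = 0" by (simp add: mult.commute)
  moreover have "\<forall>s\<in>S. c' s \<in> K"
    using c'_fixed fixed by (auto simp: fixed_field_def)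
  ultimately have "\<forall>s\<in>S. c' s = 0" using indep by (simp add: lin_indep_over_def)
  with s\<^sub>0 show False by (simp add: c'_def)
qed

lemma lin_comb_of_dependent_insert:
  assumes K: "is_subfield K" and S: "lin_indep_over K S" and "y \<notin> S"
    and dep: "\<not> lin_indep_over K (insert y S)"
  shows "\<exists>c. (\<forall>s\<in>S. c s \<in> K) \<and> y = (\<Sum>s\<in>S. c s * s)"
proof -
  have fin: "finite S" using S by (simp add: lin_indep_over_def)
  obtain c where c_K: "\<forall>s\<in>insert y S. c s \<in> K" and c_rel: "(\<Sum>s\<in>insert y S. c s * s) = 0"
    and nz: "\<exists>s\<in>insert y S. c s \<noteq> 0"
    using dep fin by (auto simp: lin_indep_over_def)
  have rel: "(\<Sum>s\<in>S. c s * s) = - (c y * y)"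
    using c_rel \<open>y \<notin> S\<close> fin by (simp add: eq_neg_iff_add_eq_0 add.commute)
  have "c y \<noteq> 0"
  proof
    assume "c y = 0"
    with rel S c_K have "\<forall>s\<in>S. c s = 0" unfolding lin_indep_over_def by (auto dest: spec[of _ c])
    with nz \<open>c y = 0\<close> show False by auto
  qed
  have "- c s / c y \<in> K" if "s \<in> S" for s
  proof -
    have "c s \<in> K" "inverse (c y) \<in> K"
      using K c_K that \<open>c y \<noteq> 0\<close> by (auto simp: is_subfield_def)
    then have "- (c s * inverse (c y)) \<in> K"
      using K by (simp add: is_subfield_def)
    then show ?thesis by (simp add: divide_inverse)
  qed
  moreover have "(\<Sum>s\<in>S. (- c s / c y) * s) = y"
  proof -
    have "(\<Sum>s\<in>S. (- c s / c y) * s) = - (\<Sum>s\<in>S. c s * s) / c y"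
      by (simp add: sum_divide_distrib sum_negf)
    with rel \<open>c y \<noteq> 0\<close> show ?thesis by simp
  qed
  ultimately show ?thesis by (intro exI[of _ "\<lambda>s. - c s / c y"]) simp
qed

lemma lin_comb_of_max_card_lin_indep:
  assumes K: "is_subfield K" and S: "S \<subseteq> V" "lin_indep_over K S"
    and max: "\<And>T. T \<subseteq> V \<Longrightarrow> lin_indep_over K T \<Longrightarrow> card T \<le> card S" and y: "y \<in> V"
  shows "\<exists>c. (\<forall>s\<in>S. c s \<in> K) \<and> y = (\<Sum>s\<in>S. c s * s)"
proof -
  have fin: "finite S" using S(2) by (simp add: lin_indep_over_def)
  show ?thesis
  proof (cases "y \<in> S")
    case True
    have "(\<Sum>s\<in>S. (if s = y then 1 else 0) * s) = (\<Sum>s\<in>S. if s = y then y else 0)"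
      by (rule sum.cong) auto
    also have "\<dots> = y" using True fin by simp
    finally show ?thesis
      using K by (intro exI[of _ "\<lambda>s. if s = y then 1 else 0"]) (simp add: is_subfield_def)
  next
    case False
    have "\<not> lin_indep_over K (insert y S)"
    proof
      assume "lin_indep_over K (insert y S)"
      then have "card (insert y S) \<le> card S" using max[of "insert y S"] S(1) y by simp
      with False fin show False by simp
    qed
    with K S(2) False show ?thesis by (rule lin_comb_of_dependent_insert)
  qed
qed

lemma rank_over_spanning_lin_indep:
  assumes K: "is_subfield K" "finite (galois_group K)" "fixed_field (galois_group K) = K"
  obtains S where "lin_indep_over K S" "card S = rank_over K f"
    "\<forall>y\<in>range f. \<exists>c. (\<forall>s\<in>S. c s \<in> K) \<and> y = (\<Sum>s\<in>S. c s * s)"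
proof -
  define Ind where "Ind = {S. S \<subseteq> range f \<and> lin_indep_over K S}"
  have "card ` Ind \<subseteq> {..card (galois_group K)}"
    using card_lin_indep_le_card_galois_group K(2,3) by (auto simp: Ind_def)
  then have "finite (card ` Ind)" by (rule finite_subset) simp
  moreover have "{} \<in> Ind" by (simp add: Ind_def lin_indep_over_def)
  ultimately obtain S where S: "S \<in> Ind" "card S = Max (card ` Ind)"
    using Max_in[of "card ` Ind"] by fastforce
  have max: "card T \<le> card S" if "T \<subseteq> range f" "lin_indep_over K T" for T
    using that S(2) \<open>finite (card ` Ind)\<close> by (simp add: Ind_def)
  have "S \<subseteq> range f" "lin_indep_over K S" using S(1) by (simp_all add: Ind_def)
  moreover have "card S = rank_over K f" using S(2) by (simp add: rank_over_def Ind_def)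
  moreover note lin_comb_of_max_card_lin_indep[OF K(1) \<open>S \<subseteq> range f\<close> \<open>lin_indep_over K S\<close> max]
  ultimately show ?thesis using that by blast
qed

text \<open>If no nontrivial \<open>L\<close>-linear combination of the maps \<open>\<sigma>\<^sub>j \<circ> f\<close> (\<open>j \<in> J\<close>) vanishes,
  then \<open>rk\<^sub>K f \<ge> |J|\<close>: otherwise the \<open>|J|\<close> unknowns \<open>c\<^sub>j\<close> of the system
  \<open>\<Sum>\<^sub>j c\<^sub>j \<sigma>\<^sub>j s = 0\<close>, \<open>s\<close> ranging over a \<open>K\<close>-basis of \<open>f(L)\<close>, would admit a nontrivial solution.\<close>
lemma rank_over_ge_card_of_conjugates:
  fixes \<sigma> :: "'j \<Rightarrow> 'a::field \<Rightarrow> 'a"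
  assumes K: "is_subfield K" "finite (galois_group K)" "fixed_field (galois_group K) = K"
    and J: "finite J" "\<forall>j\<in>J. \<sigma> j \<in> galois_group K"
    and indep: "\<And>c. \<forall>x. (\<Sum>j\<in>J. c j * \<sigma> j (f x)) = 0 \<Longrightarrow> \<forall>j\<in>J. c j = 0"
  shows "card J \<le> rank_over K f"
proof (rule ccontr)
  obtain S where S: "lin_indep_over K S" "card S = rank_over K f"
    and span: "\<forall>y\<in>range f. \<exists>d. (\<forall>s\<in>S. d s \<in> K) \<and> y = (\<Sum>s\<in>S. d s * s)"
    using rank_over_spanning_lin_indep[OF K] by blast
  assume "\<not> ?thesis"
  with S have "finite S" "card S < card J" by (simp_all add: lin_indep_over_def)
  then obtain c where c: "\<exists>j\<in>J. c j \<noteq> 0" "\<forall>s\<in>S. (\<Sum>j\<in>J. \<sigma> j s * c j) = 0"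
    using homogeneous_system_nontrivial_solution[of S J "\<lambda>s j. \<sigma> j s"] J(1) by blast
  have vanish: "\<forall>x. (\<Sum>j\<in>J. c j * \<sigma> j (f x)) = 0"
  proof
    fix x
    obtain d where d: "\<forall>s\<in>S. d s \<in> K" "f x = (\<Sum>s\<in>S. d s * s)" using span by blast
    have "\<sigma> j (f x) = (\<Sum>s\<in>S. d s * \<sigma> j s)" if "j \<in> J" for j
    proof -
      have "field_aut (\<sigma> j)" "\<forall>z\<in>K. \<sigma> j z = z"
        using J(2) that by (auto simp: galois_group_def)
      with d show ?thesis by (simp add: field_aut_sum field_aut_mult)
    qed
    then have "(\<Sum>j\<in>J. c j * \<sigma> j (f x)) = (\<Sum>j\<in>J. c j * (\<Sum>s\<in>S. d s * \<sigma> j s))"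
      by (intro sum.cong) simp_all
    also have "\<dots> = (\<Sum>s\<in>S. d s * (\<Sum>j\<in>J. \<sigma> j s * c j))"
      by (simp add: sum_distrib_left sum.swap[of _ J S] mult_ac)
    also have "\<dots> = 0" using c(2) by simp
    finally show "(\<Sum>j\<in>J. c j * \<sigma> j (f x)) = 0" .
  qed
  then have "\<forall>j\<in>J. c j = 0" by (rule indep)
  with c(1) show False by blast
qed

lemma Delta_eq_image_PiE:
  "Delta m a = (\<lambda>f k. if k < m then f k else 0) ` (PiE {..<m} (\<lambda>k. {..<a k}))"
proof (intro set_eqI iffI)
  fix j assume j: "j \<in> Delta m a"
  then have "j = (\<lambda>k. if k < m then restrict j {..<m} k else 0)"
    by (auto simp: Delta_def)
  moreover have "restrict j {..<m} \<in> PiE {..<m} (\<lambda>k. {..<a k})"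
    using j by (auto simp: Delta_def)
  ultimately show "j \<in> (\<lambda>f k. if k < m then f k else 0) ` (PiE {..<m} (\<lambda>k. {..<a k}))"
    by blast
qed (auto simp: Delta_def PiE_def Pi_def)

lemma finite_Delta: "finite (Delta m a)"
  unfolding Delta_eq_image_PiE by (intro finite_imageI finite_PiE) auto

lemma card_Delta: "card (Delta m a) = (\<Prod>k<m. a k)"
proof -
  have "inj_on (\<lambda>f k. if k < m then f k else 0) (PiE {..<m} (\<lambda>k. {..<a k}))"
  proof (rule inj_onI)
    fix f g
    assume f: "f \<in> PiE {..<m} (\<lambda>k. {..<a k})" and g: "g \<in> PiE {..<m} (\<lambda>k. {..<a k})"
      and eq: "(\<lambda>k. if k < m then f k else 0) = (\<lambda>k. if k < m then g k else 0)"
    show "f = g"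
    proof (rule PiE_ext[OF f g])
      fix k assume "k \<in> {..<m}"
      then show "f k = g k" using fun_cong[OF eq, of k] by simp
    qed
  qed
  then show ?thesis unfolding Delta_eq_image_PiE by (simp add: card_image card_PiE)
qed

lemma absidx_add: "absidx m (\<lambda>k. j k + i k) = absidx m j + absidx m i"
  by (simp add: absidx_def sum.distrib)

text \<open>Addition in \<open>\<int>/n\<^sub>1\<int> \<times> \<dots> \<times> \<int>/n\<^sub>m\<int>\<close> on the representatives \<open>Delta m n\<close>.\<close>
definition idx_add :: "(nat \<Rightarrow> nat) \<Rightarrow> (nat \<Rightarrow> nat) \<Rightarrow> (nat \<Rightarrow> nat) \<Rightarrow> nat \<Rightarrow> nat" where
  "idx_add n j i = (\<lambda>k. (j k + i k) mod n k)"

lemma idx_add_in_Delta: "j \<in> Delta m n \<Longrightarrow> i \<in> Delta m n \<Longrightarrow> idx_add n j i \<in> Delta m n"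
  by (auto simp: Delta_def idx_add_def)

lemma Delta_diff_subset: "Delta m (\<lambda>k. n k - u k) \<subseteq> Delta m n"
  by (auto simp: Delta_def)

lemma idx_add_eq_add:
  assumes "j \<in> Delta m (\<lambda>k. n k - u k)" "u \<in> Delta m n"
  shows "idx_add n j u = (\<lambda>k. j k + u k)"
proof
  fix k
  have "\<forall>k<m. j k + u k < n k" "\<forall>k\<ge>m. j k = 0 \<and> u k = 0"
    using assms by (auto simp: Delta_def)
  then show "idx_add n j u k = j k + u k"
    by (cases "k < m") (auto simp: idx_add_def not_less)
qed

lemma funpow_commute_funpow:
  assumes "\<And>x. f (g x) = g (f x)"
  shows "(f ^^ a) ((g ^^ b) x) = (g ^^ b) ((f ^^ a) x)"
proof -
  have "f ((g ^^ b) y) = (g ^^ b) (f y)" for y by (induction b) (simp_all add: assms)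
  then show ?thesis by (induction a) simp_all
qed

lemma theta_pow_commute:
  assumes comm: "\<forall>j<m. \<forall>k<m. \<theta> j \<circ> \<theta> k = \<theta> k \<circ> \<theta> j" and "p \<le> q" "q < m"
  shows "(\<theta> q ^^ a) (theta_pow \<theta> p i x) = theta_pow \<theta> p i ((\<theta> q ^^ a) x)"
  using assms(2)
proof (induction p arbitrary: x)
  case (Suc p)
  have "\<theta> q \<circ> \<theta> p = \<theta> p \<circ> \<theta> q"
    using comm Suc.prems \<open>q < m\<close> by simp
  then have "\<theta> q (\<theta> p y) = \<theta> p (\<theta> q y)" for y
    by (simp add: fun_eq_iff)
  then have "(\<theta> q ^^ a) ((\<theta> p ^^ i p) y) = (\<theta> p ^^ i p) ((\<theta> q ^^ a) y)" for y
    by (rule funpow_commute_funpow)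
  with Suc show ?case by simp
qed simp

lemma theta_pow_add:
  assumes comm: "\<forall>j<m. \<forall>k<m. \<theta> j \<circ> \<theta> k = \<theta> k \<circ> \<theta> j" and "p \<le> m"
  shows "theta_pow \<theta> p j (theta_pow \<theta> p i x) = theta_pow \<theta> p (\<lambda>k. j k + i k) x"
  using assms(2)
proof (induction p arbitrary: x)
  case (Suc p)
  then show ?case
    using theta_pow_commute[OF comm, of p p "j p" i] by (simp add: funpow_add)
qed simp

lemma theta_pow_mod:
  assumes ord: "\<forall>j<m. \<theta> j ^^ n j = id" and "p \<le> m"
  shows "theta_pow \<theta> p i = theta_pow \<theta> p (\<lambda>k. i k mod n k)"
  using assms(2)
proof (induction p)
  case (Suc p)
  then have "\<theta> p ^^ i p = \<theta> p ^^ (i p mod n p)"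
    using ord by (auto simp: fun_eq_iff funpow_mod_eq)
  with Suc show ?case by simp
qed simp

lemma theta_pow_idx_add:
  assumes "\<forall>j<m. \<forall>k<m. \<theta> j \<circ> \<theta> k = \<theta> k \<circ> \<theta> j" and "\<forall>j<m. \<theta> j ^^ n j = id"
  shows "theta_pow \<theta> m j (theta_pow \<theta> m i x) = theta_pow \<theta> m (idx_add n j i) x"
  using theta_pow_add[OF assms(1) order_refl] theta_pow_mod[OF assms(2) order_refl]
  by (simp add: idx_add_def)

section \<open>The leading term of an element of \<open>L[G]\<close>\<close>

text \<open>The graded lexicographic order on multi-indices, realised as the lexicographic order
  on these lists.\<close>
definition grlex_key :: "nat \<Rightarrow> (nat \<Rightarrow> nat) \<Rightarrow> nat list" where
  "grlex_key m v = absidx m v # map v [0..<m]"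

lemma inj_on_grlex_key: "inj_on (grlex_key m) (Delta m n)"
proof (rule inj_onI)
  fix v w assume v: "v \<in> Delta m n" and w: "w \<in> Delta m n" and eq: "grlex_key m v = grlex_key m w"
  have "\<forall>k<m. v k = w k" using eq by (simp add: grlex_key_def map_eq_conv)
  moreover have "\<forall>k\<ge>m. v k = 0 \<and> w k = 0" using v w by (simp add: Delta_def)
  ultimately show "v = w" by (metis not_less ext)
qed

lemma grlex_key_le_imp_absidx_le: "grlex_key m v \<le> grlex_key m w \<Longrightarrow> absidx m v \<le> absidx m w"
  by (auto simp: grlex_key_def)

lemma map2_add_less_map2_add:
  "length xs = length zs \<Longrightarrow> length ys = length zs \<Longrightarrow> (xs::nat list) < ys \<Longrightarrow>
    map2 (+) zs xs < map2 (+) zs ys"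
proof (induction zs arbitrary: xs ys)
  case (Cons z zs)
  then obtain x xs' y ys' where xy: "xs = x # xs'" "ys = y # ys'"
    by (metis length_Suc_conv)
  with Cons show ?case by auto
qed simp

text \<open>The order is compatible with translation, and the reduction \<open>mod n\<close> can only lower the
  degree; so a product \<open>\<theta>\<^sup>j\<theta>\<^sup>i\<close> whose exponents do not wrap around is the largest one.\<close>
lemma grlex_key_idx_add_less:
  assumes lt: "grlex_key m i < grlex_key m u"
    and j: "j \<in> Delta m n" and ju: "\<forall>k<m. j k + u k < n k"
  shows "grlex_key m (idx_add n j i) < grlex_key m (\<lambda>k. j k + u k)"
proof (cases "\<exists>k<m. n k \<le> j k + i k")
  case True
  then obtain k\<^sub>0 where k\<^sub>0: "k\<^sub>0 < m" "n k\<^sub>0 \<le> j k\<^sub>0 + i k\<^sub>0" by auto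
  have "absidx m (idx_add n j i) < absidx m (\<lambda>k. j k + i k)"
    unfolding absidx_def idx_add_def
  proof (rule sum_strict_mono_ex1)
    have "n k\<^sub>0 > 0" using j k\<^sub>0 by (auto simp: Delta_def)
    with k\<^sub>0 have "(j k\<^sub>0 + i k\<^sub>0) mod n k\<^sub>0 < j k\<^sub>0 + i k\<^sub>0"
      by (meson le_trans mod_less_divisor not_le)
    with k\<^sub>0 show "\<exists>k\<in>{..<m}. (j k + i k) mod n k < j k + i k" by auto
  qed auto
  also have "\<dots> \<le> absidx m (\<lambda>k. j k + u k)"
    using lt by (auto simp: grlex_key_def absidx_add)
  finally show ?thesis by (simp add: grlex_key_def)
next
  case False
  then have "\<forall>k<m. idx_add n j i k = j k + i k" by (simp add: idx_add_def not_le)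
  then have eq: "grlex_key m (idx_add n j i) = grlex_key m (\<lambda>k. j k + i k)"
    by (simp add: grlex_key_def absidx_def)
  have "map (\<lambda>k. j k + i k) [0..<m] < map (\<lambda>k. j k + u k) [0..<m]"
    if "map i [0..<m] < map u [0..<m]"
    using map2_add_less_map2_add[OF _ _ that, of "map j [0..<m]"] by (simp add: map2_map_map)
  then have "grlex_key m (\<lambda>k. j k + i k) < grlex_key m (\<lambda>k. j k + u k)"
    using lt by (auto simp: grlex_key_def absidx_add)
  with eq show ?thesis by simp
qed

text \<open>Uniqueness of the leading term of the product of \<open>\<Sum>\<^sub>j c\<^sub>j \<theta>\<^sup>j\<close> and \<open>\<Sum>\<^sub>i b\<^sub>i \<theta>\<^sup>i\<close>, where
  \<open>u\<close> is the leading exponent of \<open>b\<close> and \<open>j\<close>, \<open>j'\<close> range over the exponents with \<open>j + u \<in> Delta m n\<close>.\<close>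
lemma idx_add_eq_leading_imp_eq:
  assumes i: "i \<in> Delta m n" "i = u \<or> grlex_key m i < grlex_key m u" and u: "u \<in> Delta m n"
    and j: "j \<in> Delta m (\<lambda>k. n k - u k)" "j' \<in> Delta m (\<lambda>k. n k - u k)"
    and le: "grlex_key m (\<lambda>k. j k + u k) \<le> grlex_key m (\<lambda>k. j' k + u k)"
    and eq: "idx_add n j i = (\<lambda>k. j' k + u k)"
  shows "j = j' \<and> i = u"
proof (cases "i = u")
  case True
  with eq idx_add_eq_add[OF j(1) u] have "(\<lambda>k. j k + u k) = (\<lambda>k. j' k + u k)" by simp
  with True show ?thesis by (simp add: fun_eq_iff)
next
  case False
  with i j(1) have "grlex_key m (idx_add n j i) < grlex_key m (\<lambda>k. j k + u k)"
    by (intro grlex_key_idx_add_less) (auto simp: Delta_def)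
  with le eq show ?thesis by simp
qed

lemma ex_max_on_finite:
  fixes f :: "'a \<Rightarrow> 'b::linorder"
  assumes "finite S" "S \<noteq> {}"
  shows "\<exists>x\<in>S. \<forall>y\<in>S. f y \<le> f x"
proof -
  have "Max (f ` S) \<in> f ` S" using assms by simp
  then obtain x where "x \<in> S" "f x = Max (f ` S)" by auto
  with assms(1) show ?thesis by (metis Max_ge finite_imageI imageI)
qed

lemma leading_index_exists:
  assumes "\<exists>i\<in>Delta m n. b i \<noteq> 0"
  obtains u where "u \<in> Delta m n" "b u \<noteq> 0" "absidx m u = theta_deg m n b"
    "\<And>i. i \<in> Delta m n \<Longrightarrow> b i \<noteq> 0 \<Longrightarrow> i = u \<or> grlex_key m i < grlex_key m u"
proof -
  define supp where "supp = {i\<in>Delta m n. b i \<noteq> 0}"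
  have "finite supp" "supp \<noteq> {}" using assms finite_Delta by (auto simp: supp_def)
  then obtain u where u: "u \<in> supp" and max: "\<forall>i\<in>supp. grlex_key m i \<le> grlex_key m u"
    using ex_max_on_finite[of supp "grlex_key m"] by blast
  have lead: "i = u \<or> grlex_key m i < grlex_key m u" if "i \<in> supp" for i
    using max that inj_on_grlex_key[of m n] u
    by (auto simp: supp_def inj_on_def order_le_less)
  have "theta_deg m n b = absidx m u"
    unfolding theta_deg_def
  proof (rule Max_eqI)
    show "finite {absidx m i |i. i \<in> Delta m n \<and> b i \<noteq> 0}"
      using \<open>finite supp\<close> by (simp add: supp_def)
    show "absidx m u \<in> {absidx m i |i. i \<in> Delta m n \<and> b i \<noteq> 0}"
      using u by (auto simp: supp_def)
  qed (use max grlex_key_le_imp_absidx_le in \<open>auto simp: supp_def\<close>)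
  then show ?thesis using that u lead by (auto simp: supp_def)
qed

lemma group_ring_mult_expand:
  fixes T :: "(nat \<Rightarrow> nat) \<Rightarrow> 'a::field \<Rightarrow> 'a"
  assumes aut: "\<forall>v\<in>Delta m n. field_aut (T v)"
    and hom: "\<And>i j x. i \<in> Delta m n \<Longrightarrow> j \<in> Delta m n \<Longrightarrow> T j (T i x) = T (idx_add n j i) x"
    and J: "J \<subseteq> Delta m n"
  shows "(\<Sum>j\<in>J. c j * T j (\<Sum>i\<in>Delta m n. b i * T i x))
    = (\<Sum>(j, i)\<in>J \<times> Delta m n. c j * T j (b i) * T (idx_add n j i) x)"
proof -
  have "c j * T j (\<Sum>i\<in>Delta m n. b i * T i x)
      = (\<Sum>i\<in>Delta m n. c j * T j (b i) * T (idx_add n j i) x)" if "j \<in> J" for j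
  proof -
    from that J have "j \<in> Delta m n" by blast
    with aut have fa: "field_aut (T j)" by blast
    have "T j (\<Sum>i\<in>Delta m n. b i * T i x) = (\<Sum>i\<in>Delta m n. T j (b i) * T j (T i x))"
      by (simp add: field_aut_sum[OF fa] field_aut_mult[OF fa])
    also have "\<dots> = (\<Sum>i\<in>Delta m n. T j (b i) * T (idx_add n j i) x)"
      using hom \<open>j \<in> Delta m n\<close> by (intro sum.cong) auto
    finally show ?thesis by (simp add: sum_distrib_left mult.assoc)
  qed
  then have "(\<Sum>j\<in>J. c j * T j (\<Sum>i\<in>Delta m n. b i * T i x))
      = (\<Sum>j\<in>J. \<Sum>i\<in>Delta m n. c j * T j (b i) * T (idx_add n j i) x)"
    by (rule sum.cong[OF refl])
  also have "\<dots> = (\<Sum>(j, i)\<in>J \<times> Delta m n. c j * T j (b i) * T (idx_add n j i) x)"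
    by (rule sum.cartesian_product)
  finally show ?thesis .
qed

lemma leading_monomial_fibre:
  assumes inj: "inj_on T (Delta m n)" and u: "u \<in> Delta m n"
    "\<And>i. i \<in> Delta m n \<Longrightarrow> b i \<noteq> 0 \<Longrightarrow> i = u \<or> grlex_key m i < grlex_key m u"
    and j': "j' \<in> Delta m (\<lambda>k. n k - u k)" "c j' \<noteq> 0"
    and j'_max: "\<And>j. j \<in> Delta m (\<lambda>k. n k - u k) \<Longrightarrow> c j \<noteq> 0 \<Longrightarrow>
      grlex_key m (\<lambda>k. j k + u k) \<le> grlex_key m (\<lambda>k. j' k + u k)"
    and j: "j \<in> Delta m (\<lambda>k. n k - u k)" "c j \<noteq> 0" and i: "i \<in> Delta m n" "b i \<noteq> 0"
    and eq: "T (idx_add n j i) = T (idx_add n j' u)"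
  shows "(j, i) = (j', u)"
proof -
  have "j \<in> Delta m n" "j' \<in> Delta m n" using j j' Delta_diff_subset by blast+
  with i u have "idx_add n j i \<in> Delta m n" "idx_add n j' u \<in> Delta m n"
    by (simp_all add: idx_add_in_Delta)
  with inj eq idx_add_eq_add[OF j'(1) u(1)] have "idx_add n j i = (\<lambda>k. j' k + u k)"
    by (auto simp: inj_on_def)
  with i u j j' j'_max show ?thesis
    using idx_add_eq_leading_imp_eq[of i m n u j j'] by blast
qed

text \<open>Let \<open>T : Delta m n \<rightarrow> Aut(L)\<close> be an injective homomorphism
  and \<open>u\<close> the leading exponent of \<open>P = \<Sum>\<^sub>i b\<^sub>i T\<^sub>i\<close>. If \<open>\<Sum>\<^sub>j c\<^sub>j T\<^sub>j P = 0\<close>, take \<open>j'\<close> with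
  \<open>c\<^sub>j\<^sub>' \<noteq> 0\<close> and \<open>j' + u\<close> maximal: by the uniqueness of the leading term, the only
  contribution to the coefficient of \<open>T\<^sub>j\<^sub>'\<^sub>+\<^sub>u\<close> is \<open>c\<^sub>j\<^sub>' T\<^sub>j\<^sub>'(b\<^sub>u) \<noteq> 0\<close>, contradicting
  Dedekind's lemma.\<close>
lemma conjugates_of_group_ring_element_independent:
  fixes T :: "(nat \<Rightarrow> nat) \<Rightarrow> 'a::field \<Rightarrow> 'a"
  assumes aut: "\<forall>v\<in>Delta m n. field_aut (T v)" and inj: "inj_on T (Delta m n)"
    and hom: "\<And>i j x. i \<in> Delta m n \<Longrightarrow> j \<in> Delta m n \<Longrightarrow> T j (T i x) = T (idx_add n j i) x"
    and u: "u \<in> Delta m n" "b u \<noteq> 0"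
      "\<And>i. i \<in> Delta m n \<Longrightarrow> b i \<noteq> 0 \<Longrightarrow> i = u \<or> grlex_key m i < grlex_key m u"
    and rel: "\<forall>x. (\<Sum>j\<in>Delta m (\<lambda>k. n k - u k). c j * T j (\<Sum>i\<in>Delta m n. b i * T i x)) = 0"
  shows "\<forall>j\<in>Delta m (\<lambda>k. n k - u k). c j = 0"
proof (rule ccontr)
  define D J where "D = Delta m n" and "J = Delta m (\<lambda>k. n k - u k)"
  define X where "X = J \<times> D"
  define a where "a = (\<lambda>(j, i). c j * T j (b i))"
  define \<phi> where "\<phi> = (\<lambda>(j, i). T (idx_add n j i))"
  have J_D: "J \<subseteq> D" by (simp add: J_def D_def Delta_diff_subset)
  have fin_X: "finite X" by (simp add: X_def J_def D_def finite_Delta)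
  assume "\<not> ?thesis"
  then have "{j\<in>J. c j \<noteq> 0} \<noteq> {}" by (auto simp: J_def)
  moreover have "finite {j\<in>J. c j \<noteq> 0}" by (simp add: J_def finite_Delta)
  ultimately obtain j' where j': "j' \<in> J" "c j' \<noteq> 0"
    and j'_max: "\<And>j. j \<in> J \<Longrightarrow> c j \<noteq> 0 \<Longrightarrow> grlex_key m (\<lambda>k. j k + u k) \<le> grlex_key m (\<lambda>k. j' k + u k)"
    using ex_max_on_finite[of "{j\<in>J. c j \<noteq> 0}" "\<lambda>j. grlex_key m (\<lambda>k. j k + u k)"] by blast
  have "\<forall>x. (\<Sum>\<xi>\<in>X. a \<xi> * \<phi> \<xi> x) = 0"
  proof
    fix x
    have "(\<Sum>\<xi>\<in>X. a \<xi> * \<phi> \<xi> x) = (\<Sum>(j, i)\<in>J \<times> D. c j * T j (b i) * T (idx_add n j i) x)"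
      unfolding X_def a_def \<phi>_def by (intro sum.cong) auto
    also have "\<dots> = (\<Sum>j\<in>J. c j * T j (\<Sum>i\<in>D. b i * T i x))"
      unfolding D_def by (rule group_ring_mult_expand[OF aut hom J_D[unfolded D_def], symmetric])
    also have "\<dots> = 0" using rel by (simp add: J_def D_def)
    finally show "(\<Sum>\<xi>\<in>X. a \<xi> * \<phi> \<xi> x) = 0" .
  qed
  moreover have "\<forall>\<xi>\<in>X. field_aut (\<phi> \<xi>)"
  proof
    fix \<xi> assume "\<xi> \<in> X"
    then obtain j i where "\<xi> = (j, i)" "j \<in> D" "i \<in> D" using J_D by (auto simp: X_def)
    then show "field_aut (\<phi> \<xi>)" using aut idx_add_in_Delta by (simp add: \<phi>_def D_def)
  qed
  moreover have j'u: "(j', u) \<in> X" using j' u by (simp add: X_def D_def)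
  ultimately have fibre: "(\<Sum>\<xi>\<in>{\<xi>\<in>X. \<phi> \<xi> = \<phi> (j', u)}. a \<xi>) = 0"
    using fin_X by (intro dedekind_independence_fibre)
  have "a \<xi> = 0" if \<xi>: "\<xi> \<in> {\<xi>\<in>X. \<phi> \<xi> = \<phi> (j', u)} - {(j', u)}" for \<xi>
  proof (rule ccontr)
    obtain j i where ji: "\<xi> = (j, i)" by fastforce
    with \<xi> have j: "j \<in> J" and i: "i \<in> D" and "T (idx_add n j i) = T (idx_add n j' u)"
      by (auto simp: X_def \<phi>_def)
    have "field_aut (T j)" using aut J_D j by (auto simp: D_def)
    moreover assume "a \<xi> \<noteq> 0"
    ultimately have "c j \<noteq> 0" "b i \<noteq> 0"
      using ji field_aut_zero[OF \<open>field_aut (T j)\<close>] by (auto simp: a_def)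
    with leading_monomial_fibre[OF inj u(1,3) _ _ j'_max] j i j'
      \<open>T (idx_add n j i) = T (idx_add n j' u)\<close> have "(j, i) = (j', u)"
      by (auto simp: J_def D_def)
    with \<xi> ji show False by simp
  qed
  then have "(\<Sum>\<xi>\<in>{\<xi>\<in>X. \<phi> \<xi> = \<phi> (j', u)}. a \<xi>) = a (j', u)"
    using fin_X j'u by (subst sum.remove[of _ "(j', u)"]) auto
  with fibre have "c j' * T j' (b u) = 0" by (simp add: a_def)
  moreover have "T j' (b u) \<noteq> 0"
    using aut j' J_D u(2) field_aut_eq_0_iff by (auto simp: D_def)
  ultimately show False using j'(2) by simp
qed

lemma rank_op_action_ge:
  assumes galois: "galois_ext_with_group K G"
    and comm: "\<forall>j<m. \<forall>k<m. \<theta> j \<circ> \<theta> k = \<theta> k \<circ> \<theta> j"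
    and ord: "\<forall>j<m. \<theta> j ^^ n j = id"
    and bij: "bij_betw (theta_pow \<theta> m) (Delta m n) G"
    and P_nz: "\<exists>i\<in>Delta m n. b i \<noteq> 0"
  shows "\<exists>u\<in>Delta m n. absidx m u = theta_deg m n b \<and>
           (\<Prod>k<m. n k - u k) \<le> rank_over K (op_action \<theta> m n b)"
proof -
  obtain u where u: "u \<in> Delta m n" "b u \<noteq> 0" "absidx m u = theta_deg m n b"
    "\<And>i. i \<in> Delta m n \<Longrightarrow> b i \<noteq> 0 \<Longrightarrow> i = u \<or> grlex_key m i < grlex_key m u"
    using leading_index_exists[OF P_nz] by blast
  have K: "is_subfield K" "finite (galois_group K)" "fixed_field (galois_group K) = K"
    and G: "galois_group K = G"
    using galois by (auto simp: galois_ext_with_group_def)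
  have gal: "\<forall>v\<in>Delta m n. theta_pow \<theta> m v \<in> galois_group K"
    using bij G by (auto simp: bij_betw_def)
  have "card (Delta m (\<lambda>k. n k - u k)) \<le> rank_over K (op_action \<theta> m n b)"
  proof (rule rank_over_ge_card_of_conjugates[OF K])
    show "finite (Delta m (\<lambda>k. n k - u k))" by (rule finite_Delta)
    show "\<forall>j\<in>Delta m (\<lambda>k. n k - u k). theta_pow \<theta> m j \<in> galois_group K"
      using gal Delta_diff_subset by blast
  next
    fix c
    assume "\<forall>x. (\<Sum>j\<in>Delta m (\<lambda>k. n k - u k). c j * theta_pow \<theta> m j (op_action \<theta> m n b x)) = 0"
    then show "\<forall>j\<in>Delta m (\<lambda>k. n k - u k). c j = 0"
      using gal u bij theta_pow_idx_add[OF comm ord]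
      by (intro conjugates_of_group_ring_element_independent[where T = "theta_pow \<theta> m" and b = b])
        (auto simp: galois_group_def op_action_def bij_betw_def)
  qed
  with u show ?thesis by (auto simp: card_Delta)
qed

section \<open>The least product \<open>\<Prod>(n\<^sub>i - u\<^sub>i)\<close> in a given degree\<close>

lemma (in comm_monoid_set) lessThan_split3:
  "(s::nat) < m \<Longrightarrow> F g {..<m} = F g {..<s} \<^bold>* g s \<^bold>* F g {s<..<m}"
proof -
  assume "s < m"
  then have "{..<m} = {..<s} \<union> insert s {s<..<m}" by auto
  moreover have "F g ({..<s} \<union> {s<..<m}) = F g {..<s} \<^bold>* F g {s<..<m}"
    by (rule union_disjoint) auto
  ultimately show ?thesis by (simp add: ac_simps)
qed

lemma mult_le_mult_of_same_sum:
  fixes a b c d :: nat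
  assumes "a + b = c + d" "a \<le> c" "a \<le> d"
  shows "a * b \<le> c * d"
proof -
  obtain p q where "c = a + p" "d = a + q" using assms(2,3) le_Suc_ex by blast
  with assms(1) show ?thesis by (simp add: algebra_simps)
qed

lemma prod_lessThan_pred: "0 < (m::nat) \<Longrightarrow> (\<Prod>k<m. f k) = f (m - 1) * (\<Prod>k<m - 1. f k)"
  by (cases m) (simp_all add: mult.commute)

definition deg_decomp :: "(nat \<Rightarrow> nat) \<Rightarrow> nat \<Rightarrow> nat \<Rightarrow> nat \<Rightarrow> nat \<Rightarrow> bool" where
  "deg_decomp n m d s l \<longleftrightarrow> s < m \<and> l < n s \<and> d = (\<Sum>j\<in>{s<..<m}. n j - 1) + l"

lemma sum_greaterThanLessThan_Suc:
  "(s::nat) < m \<Longrightarrow> (\<Sum>j\<in>{s<..<Suc m}. f j) = (\<Sum>j\<in>{s<..<m}. f j) + f m"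
proof -
  assume "s < m"
  then have "{s<..<Suc m} = insert m {s<..<m}" by auto
  then show ?thesis by (simp add: add.commute)
qed

lemma sum_le_sum_diff_1:
  fixes u n :: "nat \<Rightarrow> nat"
  assumes "\<And>k. k < m \<Longrightarrow> u k < n k"
  shows "(\<Sum>k<m. u k) \<le> (\<Sum>k<m. n k - 1)"
proof (rule sum_mono)
  fix k assume "k \<in> {..<m}"
  with assms have "u k < n k" by simp
  then show "u k \<le> n k - 1" by linarith
qed

text \<open>The three ways of passing from \<open>m + 1\<close> coordinates to \<open>m\<close>: the decomposition
  \<open>(s, l)\<close> of the degree of \<open>(u\<^sub>0, \<dots>, u\<^sub>m)\<close> is turned into one of the degree of
  \<open>(u\<^sub>0, \<dots>, u\<^sub>m\<^sub>-\<^sub>1)\<close>, and the bound only improves by the factor \<open>n\<^sub>m - u\<^sub>m\<close>.\<close>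
lemma deg_decomp_Suc_last:
  assumes mono: "n m \<le> n (m - 1)" and "0 < m" and dec: "deg_decomp n (Suc m) (d + u m) m l"
  shows "deg_decomp n m d (m - 1) (l - u m)"
    and "(n m - l) * (\<Prod>k<m. n k) \<le> (n (m - 1) - (l - u m)) * (\<Prod>k<m - 1. n k) * (n m - u m)"
proof -
  have l: "d + u m = l" "l < n m" using dec by (simp_all add: deg_decomp_def)
  have "{m - 1<..<m} = {}" by auto
  moreover have "l - u m < n (m - 1)" "d = l - u m" using l mono by linarith+
  ultimately show "deg_decomp n m d (m - 1) (l - u m)"
    using \<open>0 < m\<close> by (simp add: deg_decomp_def)
  have "(\<Prod>k<m. n k) = n (m - 1) * (\<Prod>k<m - 1. n k)"
    using \<open>0 < m\<close> by (rule prod_lessThan_pred)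
  then have "(n m - l) * (\<Prod>k<m. n k) = ((n m - l) * n (m - 1)) * (\<Prod>k<m - 1. n k)"
    by (simp add: mult.assoc)
  also have "\<dots> \<le> ((n (m - 1) - (l - u m)) * (n m - u m)) * (\<Prod>k<m - 1. n k)"
    by (intro mult_le_mono1 mult_le_mult_of_same_sum) (use l mono in linarith)+
  also have "\<dots> = (n (m - 1) - (l - u m)) * (\<Prod>k<m - 1. n k) * (n m - u m)"
    by (simp add: mult_ac)
  finally show "(n m - l) * (\<Prod>k<m. n k) \<le> (n (m - 1) - (l - u m)) * (\<Prod>k<m - 1. n k) * (n m - u m)" .
qed

lemma deg_decomp_Suc_same:
  assumes "u m < n m" "s < m" and dec: "deg_decomp n (Suc m) (d + u m) s l"
    and small: "l + (n m - 1 - u m) < n s"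
  shows "deg_decomp n m d s (l + (n m - 1 - u m))"
    and "(n s - l) * (\<Prod>k<s. n k) \<le> (n s - (l + (n m - 1 - u m))) * (\<Prod>k<s. n k) * (n m - u m)"
proof -
  from dec \<open>s < m\<close> have "d + u m = (\<Sum>j\<in>{s<..<m}. n j - 1) + (n m - 1) + l"
    by (simp add: deg_decomp_def sum_greaterThanLessThan_Suc)
  with assms show "deg_decomp n m d s (l + (n m - 1 - u m))"
    by (simp add: deg_decomp_def)
  have "(n s - l) * (\<Prod>k<s. n k) = (1 * (n s - l)) * (\<Prod>k<s. n k)" by simp
  also have "\<dots> \<le> ((n s - (l + (n m - 1 - u m))) * (n m - u m)) * (\<Prod>k<s. n k)"
    by (intro mult_le_mono1 mult_le_mult_of_same_sum) (use assms in linarith)+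
  also have "\<dots> = (n s - (l + (n m - 1 - u m))) * (\<Prod>k<s. n k) * (n m - u m)"
    by (simp add: mult_ac)
  finally show "(n s - l) * (\<Prod>k<s. n k) \<le> (n s - (l + (n m - 1 - u m))) * (\<Prod>k<s. n k) * (n m - u m)" .
qed

lemma deg_decomp_Suc_prev:
  assumes mono: "\<forall>i j. i \<le> j \<and> j \<le> m \<longrightarrow> n j \<le> n i" and u: "\<forall>k\<le>m. u k < n k"
    and d: "d = (\<Sum>k<m. u k)" and "s < m" and dec: "deg_decomp n (Suc m) (d + u m) s l"
    and big: "n s \<le> l + (n m - 1 - u m)"
  shows "deg_decomp n m d (s - 1) (l + (n m - 1 - u m) - (n s - 1))"
    and "(n s - l) * (\<Prod>k<s. n k)
      \<le> (n (s - 1) - (l + (n m - 1 - u m) - (n s - 1))) * (\<Prod>k<s - 1. n k) * (n m - u m)"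
proof -
  have l: "l < n s" using dec by (simp add: deg_decomp_def)
  from dec \<open>s < m\<close> have "d + u m = (\<Sum>j\<in>{s<..<m}. n j - 1) + (n m - 1) + l"
    by (simp add: deg_decomp_def sum_greaterThanLessThan_Suc)
  moreover have "u m < n m" using u by simp
  ultimately have d_eq: "d = (\<Sum>j\<in>{s<..<m}. n j - 1) + (l + (n m - 1 - u m))" by linarith
  have "0 < s"
  proof (rule ccontr)
    assume "\<not> 0 < s"
    then have "s = 0" by simp
    have "d \<le> (\<Sum>k<m. n k - 1)"
      unfolding d using u by (intro sum_le_sum_diff_1) simp
    also have "\<dots> = (n 0 - 1) + (\<Sum>j\<in>{0<..<m}. n j - 1)"
      using sum.lessThan_split3[of 0 m] \<open>s < m\<close> \<open>s = 0\<close> by simp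
    finally show False using d_eq[unfolded \<open>s = 0\<close>] big[unfolded \<open>s = 0\<close>] l[unfolded \<open>s = 0\<close>]
      by linarith
  qed
  then have "{s - 1<..<m} = insert s {s<..<m}" using \<open>s < m\<close> by auto
  then have sum_eq: "(\<Sum>j\<in>{s - 1<..<m}. n j - 1) = (n s - 1) + (\<Sum>j\<in>{s<..<m}. n j - 1)"
    by simp
  have "n m \<le> n (s - 1)" using mono \<open>s < m\<close> by simp
  moreover have "u m < n m" using u by simp
  ultimately show "deg_decomp n m d (s - 1) (l + (n m - 1 - u m) - (n s - 1))"
    unfolding deg_decomp_def sum_eq using d_eq big l \<open>s < m\<close> by (intro conjI) linarith+
  have "(\<Prod>k<s. n k) = n (s - 1) * (\<Prod>k<s - 1. n k)"
    using \<open>0 < s\<close> by (rule prod_lessThan_pred)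
  then have "(n s - l) * (\<Prod>k<s. n k) = ((n s - l) * n (s - 1)) * (\<Prod>k<s - 1. n k)"
    by (simp add: mult.assoc)
  also have "\<dots> \<le> ((n m - u m) * (n (s - 1) - (l + (n m - 1 - u m) - (n s - 1)))) * (\<Prod>k<s - 1. n k)"
    by (intro mult_le_mono1 mult_le_mult_of_same_sum) (use l big \<open>u m < n m\<close> \<open>n m \<le> n (s - 1)\<close> in linarith)+
  also have "\<dots> = (n (s - 1) - (l + (n m - 1 - u m) - (n s - 1))) * (\<Prod>k<s - 1. n k) * (n m - u m)"
    by (simp add: mult_ac)
  finally show "(n s - l) * (\<Prod>k<s. n k)
      \<le> (n (s - 1) - (l + (n m - 1 - u m) - (n s - 1))) * (\<Prod>k<s - 1. n k) * (n m - u m)" .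
qed

lemma deg_decomp_Suc_reduce:
  assumes mono: "\<forall>i j. i \<le> j \<and> j \<le> m \<longrightarrow> n j \<le> n i" and u: "\<forall>k\<le>m. u k < n k" and "0 < m"
    and dec: "deg_decomp n (Suc m) ((\<Sum>k<m. u k) + u m) s l"
  obtains s' l' where "deg_decomp n m (\<Sum>k<m. u k) s' l'"
    "(n s - l) * (\<Prod>k<s. n k) \<le> (n s' - l') * (\<Prod>k<s'. n k) * (n m - u m)"
proof -
  consider "s = m" | "s < m" "l + (n m - 1 - u m) < n s" | "s < m" "n s \<le> l + (n m - 1 - u m)"
    using dec by (fastforce simp: deg_decomp_def)
  then show ?thesis
  proof cases
    case 1
    have "n m \<le> n (m - 1)" using mono by simp
    with \<open>0 < m\<close> dec 1 show ?thesis using deg_decomp_Suc_last that by blast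
  next
    case 2
    have "u m < n m" using u by simp
    with 2 dec show ?thesis using deg_decomp_Suc_same that by blast
  next
    case 3
    with mono u dec show ?thesis using deg_decomp_Suc_prev[OF mono u refl] that by blast
  qed
qed

lemma prod_ge_of_deg_decomp:
  assumes "\<forall>i j. i \<le> j \<and> j < m \<longrightarrow> n j \<le> n i" "\<forall>k<m. u k < n k"
    and "deg_decomp n m (\<Sum>k<m. u k) s l"
  shows "(n s - l) * (\<Prod>k<s. n k) \<le> (\<Prod>k<m. n k - u k)"
  using assms
proof (induction m arbitrary: s l)
  case 0
  then show ?case by (simp add: deg_decomp_def)
next
  case (Suc m)
  show ?case
  proof (cases "m = 0")
    case True
    with Suc.prems(3) have "s = 0" "{s<..<Suc m} = {}" by (auto simp: deg_decomp_def)
    with Suc.prems(3) True show ?thesis by (simp add: deg_decomp_def)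
  next
    case False
    have "\<forall>i j. i \<le> j \<and> j \<le> m \<longrightarrow> n j \<le> n i" "\<forall>k\<le>m. u k < n k"
      using Suc.prems(1,2) by auto
    moreover have "deg_decomp n (Suc m) ((\<Sum>k<m. u k) + u m) s l" using Suc.prems(3) by simp
    ultimately obtain s' l' where dec: "deg_decomp n m (\<Sum>k<m. u k) s' l'"
      and le: "(n s - l) * (\<Prod>k<s. n k) \<le> (n s' - l') * (\<Prod>k<s'. n k) * (n m - u m)"
      using False by (elim deg_decomp_Suc_reduce) auto
    have "(n s' - l') * (\<Prod>k<s'. n k) \<le> (\<Prod>k<m. n k - u k)"
      using Suc.IH[OF _ _ dec] Suc.prems(1,2) by simp
    with le have "(n s - l) * (\<Prod>k<s. n k) \<le> (\<Prod>k<m. n k - u k) * (n m - u m)"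
      using mult_le_mono1 order_trans by blast
    then show ?thesis by simp
  qed
qed

text \<open>The exponent \<open>(0, \<dots>, 0, l, n\<^sub>s\<^sub>+\<^sub>1 - 1, \<dots>, n\<^sub>m\<^sub>-\<^sub>1 - 1)\<close>, which attains the bound.\<close>
definition greedy_idx :: "nat \<Rightarrow> (nat \<Rightarrow> nat) \<Rightarrow> nat \<Rightarrow> nat \<Rightarrow> nat \<Rightarrow> nat" where
  "greedy_idx m n s l k = (if k < s then 0 else if k = s then l else if k < m then n k - 1 else 0)"

lemma greedy_idx_in_Delta:
  assumes "\<forall>j<m. 1 \<le> n j" "deg_decomp n m d s l"
  shows "greedy_idx m n s l \<in> Delta m n"
proof -
  have "s < m" "l < n s" "\<forall>j<m. 0 < n j" using assms by (auto simp: deg_decomp_def)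
  then show ?thesis by (auto simp: Delta_def greedy_idx_def)
qed

lemma absidx_greedy_idx: "deg_decomp n m d s l \<Longrightarrow> absidx m (greedy_idx m n s l) = d"
proof -
  assume dec: "deg_decomp n m d s l"
  then have "absidx m (greedy_idx m n s l)
      = (\<Sum>k<s. greedy_idx m n s l k) + greedy_idx m n s l s + (\<Sum>k\<in>{s<..<m}. greedy_idx m n s l k)"
    unfolding absidx_def by (intro sum.lessThan_split3) (simp add: deg_decomp_def)
  also have "\<dots> = (\<Sum>k\<in>{s<..<m}. n k - 1) + l"
    by (simp add: greedy_idx_def)
  finally show ?thesis using dec by (simp add: deg_decomp_def)
qed

lemma prod_greedy_idx:
  assumes "\<forall>j<m. 1 \<le> n j" "s < m"
  shows "(\<Prod>k<m. n k - greedy_idx m n s l k) = (n s - l) * (\<Prod>k<s. n k)"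
proof -
  have "(\<Prod>k<m. n k - greedy_idx m n s l k)
      = (\<Prod>k<s. n k - greedy_idx m n s l k) * (n s - greedy_idx m n s l s)
        * (\<Prod>k\<in>{s<..<m}. n k - greedy_idx m n s l k)"
    using assms(2) by (rule prod.lessThan_split3)
  also have "(\<Prod>k\<in>{s<..<m}. n k - greedy_idx m n s l k) = 1"
    using assms(1) by (intro prod.neutral) (auto simp: greedy_idx_def)
  finally show ?thesis by (simp add: greedy_idx_def)
qed

lemma finite_prods_Delta: "finite {\<Prod>j<m. n j - u j | u. u \<in> Delta m n \<and> P u}"
  using finite_Delta[of m n] by (auto intro: finite_subset[of _ "(\<lambda>u. \<Prod>j<m. n j - u j) ` Delta m n"])

lemma Min_prods_Delta_eq:
  assumes "\<forall>j<m. 1 \<le> n j" "\<forall>i j. i \<le> j \<and> j < m \<longrightarrow> n j \<le> n i" and dec: "deg_decomp n m d s l"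
  shows "Min {\<Prod>j<m. n j - u j | u. u \<in> Delta m n \<and> absidx m u = d} = (n s - l) * (\<Prod>j<s. n j)"
proof (rule Min_eqI[OF finite_prods_Delta])
  fix y assume "y \<in> {\<Prod>j<m. n j - u j | u. u \<in> Delta m n \<and> absidx m u = d}"
  then obtain u where "u \<in> Delta m n" "absidx m u = d" "y = (\<Prod>j<m. n j - u j)" by blast
  then show "(n s - l) * (\<Prod>j<s. n j) \<le> y"
    using prod_ge_of_deg_decomp[of m n u s l] assms(2) dec by (simp add: Delta_def absidx_def)
next
  have "s < m" using dec by (simp add: deg_decomp_def)
  with assms have "greedy_idx m n s l \<in> Delta m n" "absidx m (greedy_idx m n s l) = d"
    "(\<Prod>j<m. n j - greedy_idx m n s l j) = (n s - l) * (\<Prod>j<s. n j)"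
    by (simp_all add: greedy_idx_in_Delta absidx_greedy_idx prod_greedy_idx)
  then show "(n s - l) * (\<Prod>j<s. n j) \<in> {\<Prod>j<m. n j - u j | u. u \<in> Delta m n \<and> absidx m u = d}"
    by (auto intro!: exI[of _ "greedy_idx m n s l"])
qed

theorem mainTheorem13:
  fixes K :: "'a::field set"
    and \<theta> :: "nat \<Rightarrow> 'a \<Rightarrow> 'a"
    and m :: nat
    and n :: "nat \<Rightarrow> nat"
    and G :: "('a \<Rightarrow> 'a) set"
    and b :: "(nat \<Rightarrow> nat) \<Rightarrow> 'a"
  assumes m_pos: "m \<ge> 1"
    and n_ge2: "\<forall>j<m. n j \<ge> 2"
    and n_mono: "\<forall>i j. i \<le> j \<and> j < m \<longrightarrow> n j \<le> n i"
    and galois: "galois_ext_with_group K G"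
    and comm: "\<forall>j<m. \<forall>k<m. \<theta> j \<circ> \<theta> k = \<theta> k \<circ> \<theta> j"
    and ord: "\<forall>j<m. \<theta> j ^^ n j = id"
    and bij: "bij_betw (theta_pow \<theta> m) (Delta m n) G"
    and b_supp: "\<forall>i. b i \<noteq> 0 \<longrightarrow> i \<in> Delta m n"
    and P_nz: "\<exists>i\<in>Delta m n. b i \<noteq> 0"
  shows "rank_over K (op_action \<theta> m n b)
           \<ge> Min {\<Prod>j<m. n j - u j | u. u \<in> Delta m n \<and> absidx m u = theta_deg m n b}
     \<and> (\<forall>s l. s < m \<and> l < n s \<and>
           theta_deg m n b = (\<Sum>j\<in>{s<..<m}. n j - 1) + l \<longrightarrow>
           Min {\<Prod>j<m. n j - u j | u. u \<in> Delta m n \<and> absidx m u = theta_deg m n b}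
             = (n s - l) * (\<Prod>j<s. n j))"
proof (intro conjI allI impI)
  obtain u where "u \<in> Delta m n" "absidx m u = theta_deg m n b"
    and rank: "(\<Prod>k<m. n k - u k) \<le> rank_over K (op_action \<theta> m n b)"
    using rank_op_action_ge[OF galois comm ord bij P_nz] by blast
  then have "Min {\<Prod>j<m. n j - u j | u. u \<in> Delta m n \<and> absidx m u = theta_deg m n b}
      \<le> (\<Prod>k<m. n k - u k)"
    by (intro Min_le[OF finite_prods_Delta]) blast
  with rank show "Min {\<Prod>j<m. n j - u j | u. u \<in> Delta m n \<and> absidx m u = theta_deg m n b}
      \<le> rank_over K (op_action \<theta> m n b)" by simp
next
  fix s l
  assume "s < m \<and> l < n s \<and> theta_deg m n b = (\<Sum>j\<in>{s<..<m}. n j - 1) + l"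
  then have "deg_decomp n m (theta_deg m n b) s l" by (simp add: deg_decomp_def)
  with n_ge2 n_mono show "Min {\<Prod>j<m. n j - u j | u. u \<in> Delta m n \<and> absidx m u = theta_deg m n b}
      = (n s - l) * (\<Prod>j<s. n j)"
    by (intro Min_prods_Delta_eq) auto
qed

end
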